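(* Suppose $\hat{e}(X_i) \in (0, 1)$ for all $i$, let $\hat{\gamma}$ minimize $\mathcal{L}_n(\gamma) := \mathbb{P}_n \rho_{\tau}(Y - \gamma^{\top} g(X)) Z \tfrac{1 - \hat{e}(X)}{\hat{e}(X)}$ and let $\hat{V}_i = \textup{sign}(Y_i - \hat{\gamma}^{\top} g(X_i))$. Then the optimal objective value of the optimization problem \begin{align*} \max_{\bar{e} \in \mathcal{E}_n(\Lambda)} \frac{\mathbb{P}_n YZ/\bar{e}}{\mathbb{P}_n Z/\hat{e}(X)} \quad \text{subject to} \quad \mathbb{P}_n g(X) Z / \bar{e} = \mathbb{P}_n g(X) Z / \hat{e}(X) \end{align*} is: \begin{align*} \frac{\mathbb{P}_n(Y - \hat{\gamma}^{\top} g(X)) Z(1 + \Lambda^{\hat{V}}(1-\hat{e}(X))/\hat{e}(X)) + \mathbb{P}_n \hat{\gamma}^{\top} g(X) Z / \hat{e}(X)}{\mathbb{P}_n Z / \hat{e}(X)}. \end{align*}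
   Context: We observe i.i.d. samples $(X_i, Y_i, Z_i)$, $i = 1, \dots, n$, with covariates $X_i \in \mathcal{X} \subseteq \mathbb{R}^d$, binary treatment $Z_i \in \{0,1\}$ and real outcome $Y_i$. $\hat{e}(x)$ is an estimate of the nominal propensity score $e(x) = P(Z=1 \mid X=x)$. $\Lambda \geq 1$ is fixed and $\tau = \Lambda/(\Lambda+1)$. $\mathbb{P}_n[\cdot]$ denotes the average $\tfrac{1}{n}\sum_{i=1}^n[\cdot]_i$ (for a vector $v$, $\mathbb{P}_n v = \tfrac1n\sum_i v_i$). The constraint set is $\mathcal{E}_n(\Lambda) = \{ \bar{e} \in \mathbb{R}^n : \Lambda^{-1} \leq \frac{\bar{e}_i/(1-\bar{e}_i)}{\hat{e}(X_i)/(1-\hat{e}(X_i))} \leq \Lambda \text{ for all } i \}$. $g : \mathcal{X} \to \mathbb{R}^k$ is a function containing an ``intercept'' (constant component), e.g. $g(x) = (1, \hat{Q}_\tau(x,1))$ with $\hat{Q}_\tau$ an estimated conditional quantile of $Y$. $\rho_{\tau}(u) = u(\tau - \mathbb{I}\{u < 0\})$ is the quantile regression check function. *)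

theory Defs
  imports "HOL-Analysis.Analysis"
begin

definition Pn :: "nat \<Rightarrow> (nat \<Rightarrow> 'a::real_vector) \<Rightarrow> 'a" where
  "Pn n f = (1 / real n) *\<^sub>R (\<Sum>i<n. f i)"

definition rho :: "real \<Rightarrow> real \<Rightarrow> real" where
  "rho tau u = u * (tau - (if u < 0 then 1 else 0))"

definition Eset :: "nat \<Rightarrow> real \<Rightarrow> (nat \<Rightarrow> real) \<Rightarrow> (nat \<Rightarrow> real) set" where
  "Eset n Lam ehatX = {ebar. \<forall>i<n.
      inverse Lam \<le> (ebar i / (1 - ebar i)) / (ehatX i / (1 - ehatX i)) \<and>
      (ebar i / (1 - ebar i)) / (ehatX i / (1 - ehatX i)) \<le> Lam}"

definition Ln :: "nat \<Rightarrow> real \<Rightarrow> ('d \<Rightarrow> real) \<Rightarrow> ('d \<Rightarrow> real ^ 'k) \<Rightarrow>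
    (nat \<Rightarrow> 'd) \<Rightarrow> (nat \<Rightarrow> real) \<Rightarrow> (nat \<Rightarrow> real) \<Rightarrow> real ^ 'k \<Rightarrow> real" where
  "Ln n tau ehat g X Y Z gamma =
     Pn n (\<lambda>i. rho tau (Y i - gamma \<bullet> g (X i)) * Z i * (1 - ehat (X i)) / ehat (X i))"

end

theory Submission
  imports Defs
begin

text \<open>
  Writing \<open>1 / ebar\<^sub>i = 1 + q\<^sub>i (1 - ehat\<^sub>i) / ehat\<^sub>i\<close>, the constraint set \<open>E\<^sub>n(\<Lambda>)\<close> becomes
  the box \<open>q\<^sub>i \<in> [\<Lambda>\<^sup>-\<^sup>1, \<Lambda>]\<close>. For every \<open>\<gamma>\<close> the balancing constraint lets us replace \<open>Y\<close> by
  the residual \<open>r = Y - \<gamma>\<^sup>T g(X)\<close> in the numerator, and the term \<open>r\<^sub>i (1 + q\<^sub>i (1 - ehat\<^sub>i) / ehat\<^sub>i)\<close>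
  is largest for \<open>q\<^sub>i = \<Lambda>\<^bsup>sign r\<^sub>i\<^esup>\<close>: this is weak duality.
  At the quantile regression fit \<open>\<gamma> = \<gamma>hat\<close> the bound is attained. Optimality of \<open>\<gamma>hat\<close> yields
  subgradients \<open>s\<^sub>i \<in> [\<tau> - 1, \<tau>]\<close> of the check function at the residuals with
  \<open>\<Sum> Z\<^sub>i (1 - ehat\<^sub>i) / ehat\<^sub>i s\<^sub>i g(X\<^sub>i) = 0\<close> (separate \<open>0\<close> from the compact convex set of all
  such sums to find a descent direction otherwise), and \<open>q\<^sub>i = 1 + s\<^sub>i (\<Lambda> - \<Lambda>\<^sup>-\<^sup>1)\<close> is then both
  balancing and extremal.
\<close>

lemma Pn_real: "Pn n (f :: nat \<Rightarrow> real) = (\<Sum>i<n. f i) / real n"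
  unfolding Pn_def by simp

lemma Pn_cong: "(\<And>i. i < n \<Longrightarrow> f i = h i) \<Longrightarrow> Pn n f = Pn n h"
  unfolding Pn_def by (metis lessThan_iff sum.cong)

lemma Pn_add: "Pn n (\<lambda>i. f i + h i) = Pn n f + Pn n h"
  unfolding Pn_def by (simp add: sum.distrib scaleR_add_right)

lemma Pn_mono: "(\<And>i. i < n \<Longrightarrow> (f i :: real) \<le> h i) \<Longrightarrow> Pn n f \<le> Pn n h"
  unfolding Pn_real by (intro divide_right_mono sum_mono) auto

lemma Pn_nonneg: "(\<And>i. i < n \<Longrightarrow> (f i :: real) \<ge> 0) \<Longrightarrow> Pn n f \<ge> 0"
  unfolding Pn_real by (intro divide_nonneg_nonneg sum_nonneg) auto

lemma Pn_le_Pn_iff: "Pn n f \<le> Pn n h \<longleftrightarrow> (\<Sum>i<n. f i :: real) \<le> (\<Sum>i<n. h i)"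
  unfolding Pn_real by (cases "n = 0") (auto simp: divide_le_cancel)

lemma inner_Pn_scaleR: "\<gamma> \<bullet> Pn n (\<lambda>i. f i *\<^sub>R v i) = Pn n (\<lambda>i. (\<gamma> \<bullet> v i) * f i)"
  unfolding Pn_def by (simp add: inner_sum_right mult.commute)

definition rho_subdiff :: "real \<Rightarrow> real \<Rightarrow> real set" where
  "rho_subdiff tau r = {if r > 0 then tau else tau - 1 .. if r < 0 then tau - 1 else tau}"

lemma rho_subdiff_subset: "rho_subdiff tau r \<subseteq> {tau - 1..tau}"
  by (auto simp: rho_subdiff_def)

lemma rho_diff_eventually:
  "eventually (\<lambda>t. rho tau (r - t * u) = rho tau r - t * (tau - of_bool (r < 0 \<or> r = 0 \<and> u > 0)) * u)
     (at_right 0)"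
proof -
  have lim: "((\<lambda>t. r - t * u) \<longlongrightarrow> r) (at_right 0)"
    by (auto intro!: tendsto_eq_intros)
  have "eventually (\<lambda>t. (r - t * u < 0) = (r < 0 \<or> r = 0 \<and> u > 0)) (at_right 0)"
  proof (cases r "0::real" rule: linorder_cases)
    case less
    from order_tendstoD(2)[OF lim less] show ?thesis by eventually_elim (use less in simp)
  next
    case equal
    from eventually_at_right_less[of 0] show ?thesis
      by eventually_elim (use equal in \<open>simp add: zero_less_mult_iff\<close>)
  next
    case greater
    from order_tendstoD(1)[OF lim greater] show ?thesis by eventually_elim (use greater in simp)
  qed
  then show ?thesis
    by eventually_elim (auto simp: rho_def algebra_simps)
qed

lemma compact_set_sum:
  fixes S :: "'b \<Rightarrow> 'a::real_normed_vector set"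
  assumes "\<And>i. i \<in> A \<Longrightarrow> compact (S i)"
  shows "compact (\<Sum>i\<in>A. S i)"
  using assms
proof (induction A rule: infinite_finite_induct)
  case (insert i A)
  have "S i + sum S A = {x + y |x y. x \<in> S i \<and> y \<in> sum S A}"
    by (auto simp: set_plus_def)
  with insert show ?case by (simp add: compact_sums)
qed auto

lemma set_sum_image:
  fixes f :: "'i \<Rightarrow> 'b \<Rightarrow> 'a::comm_monoid_add"
  assumes "finite A"
  shows "(\<Sum>i\<in>A. f i ` S i) = {\<Sum>i\<in>A. f i (t i) |t. \<forall>i\<in>A. t i \<in> S i}"
  unfolding set_sum_alt[OF assms]
proof (rule Collect_cong)
  fix y
  show "(\<exists>x. y = sum x A \<and> (\<forall>i\<in>A. x i \<in> f i ` S i)) \<longleftrightarrow>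
        (\<exists>t. y = (\<Sum>i\<in>A. f i (t i)) \<and> (\<forall>i\<in>A. t i \<in> S i))"
  proof
    assume "\<exists>x. y = sum x A \<and> (\<forall>i\<in>A. x i \<in> f i ` S i)"
    then obtain x where y: "y = sum x A" and "\<forall>i\<in>A. x i \<in> f i ` S i"
      by blast
    then have "\<forall>i\<in>A. \<exists>t. t \<in> S i \<and> x i = f i t"
      by (simp add: image_iff Bex_def)
    then obtain t where "\<forall>i\<in>A. t i \<in> S i \<and> x i = f i (t i)"
      by (metis bchoice)
    with y show "\<exists>t. y = (\<Sum>i\<in>A. f i (t i)) \<and> (\<forall>i\<in>A. t i \<in> S i)"
      by (auto intro!: sum.cong)
  next
    assume "\<exists>t. y = (\<Sum>i\<in>A. f i (t i)) \<and> (\<forall>i\<in>A. t i \<in> S i)"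
    then show "\<exists>x. y = sum x A \<and> (\<forall>i\<in>A. x i \<in> f i ` S i)"
      by blast
  qed
qed

lemma zero_mem_sum_rho_subdiff:
  fixes G :: "nat \<Rightarrow> 'a::euclidean_space" and Y c :: "nat \<Rightarrow> real"
  assumes min: "\<And>\<gamma>. (\<Sum>i<n. c i * rho tau (Y i - \<gamma>\<^sub>0 \<bullet> G i)) \<le> (\<Sum>i<n. c i * rho tau (Y i - \<gamma> \<bullet> G i))"
  shows "0 \<in> (\<Sum>i<n. (\<lambda>t. t *\<^sub>R (c i *\<^sub>R G i)) ` rho_subdiff tau (Y i - \<gamma>\<^sub>0 \<bullet> G i))"
    (is "0 \<in> (\<Sum>i<n. ?seg i)")
proof (rule ccontr)
  assume "0 \<notin> (\<Sum>i<n. ?seg i)"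
  define r where "r i = Y i - \<gamma>\<^sub>0 \<bullet> G i" for i
  have "convex (?seg i)" "compact (?seg i)" for i
    unfolding rho_subdiff_def
    by (rule convex_linear_image[OF bounded_linear.linear[OF bounded_linear_scaleR_left]], simp)
      (intro compact_continuous_image continuous_intros compact_Icc)
  then have "convex (\<Sum>i<n. ?seg i)" "closed (\<Sum>i<n. ?seg i)"
    by (simp_all add: convex_set_sum compact_imp_closed compact_set_sum)
  with \<open>0 \<notin> (\<Sum>i<n. ?seg i)\<close> obtain a \<beta>
    where "a \<bullet> 0 < \<beta>" and sep: "\<forall>x\<in>(\<Sum>i<n. ?seg i). \<beta> < a \<bullet> x"
    using separating_hyperplane_closed_point by blast
  \<comment> \<open>\<open>\<sigma> i\<close> is the slope of \<open>rho tau\<close> at \<open>r i\<close> along \<open>-(a \<bullet> G i)\<close>; the corresponding sum lies in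
      the separated set, so moving \<open>\<gamma>\<^sub>0\<close> along \<open>a\<close> decreases the objective\<close>
  define \<sigma> where "\<sigma> i = tau - of_bool (r i < 0 \<or> r i = 0 \<and> a \<bullet> G i > 0)" for i
  have "(\<Sum>i<n. \<sigma> i *\<^sub>R (c i *\<^sub>R G i)) \<in> (\<Sum>i<n. ?seg i)"
    unfolding set_sum_image[OF finite_lessThan] by (auto simp: \<sigma>_def r_def rho_subdiff_def)
  with sep \<open>a \<bullet> 0 < \<beta>\<close> have "0 < a \<bullet> (\<Sum>i<n. \<sigma> i *\<^sub>R (c i *\<^sub>R G i))"
    by force
  then have slope: "(\<Sum>i<n. c i * (\<sigma> i * (a \<bullet> G i))) > 0"
    by (simp add: inner_sum_right mult_ac)
  have "eventually (\<lambda>t. \<forall>i\<in>{..<n}. rho tau (r i - t * (a \<bullet> G i)) = rho tau (r i) - t * \<sigma> i * (a \<bullet> G i))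
      (at_right 0)"
    unfolding \<sigma>_def by (intro eventually_ball_finite ballI finite_lessThan rho_diff_eventually)
  then obtain t :: real where t: "t > 0"
    and expand: "\<And>i. i < n \<Longrightarrow> rho tau (r i - t * (a \<bullet> G i)) = rho tau (r i) - t * \<sigma> i * (a \<bullet> G i)"
    using eventually_happens'[OF trivial_limit_at_right_real eventually_conj[OF eventually_at_right_less]]
    by blast
  have "Y i - (\<gamma>\<^sub>0 + t *\<^sub>R a) \<bullet> G i = r i - t * (a \<bullet> G i)" for i
    by (simp add: r_def inner_add_left algebra_simps)
  then have "(\<Sum>i<n. c i * rho tau (Y i - (\<gamma>\<^sub>0 + t *\<^sub>R a) \<bullet> G i))
      = (\<Sum>i<n. c i * (rho tau (r i) - t * \<sigma> i * (a \<bullet> G i)))"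
    by (intro sum.cong) (simp_all add: expand)
  also have "\<dots> = (\<Sum>i<n. c i * rho tau (r i)) - t * (\<Sum>i<n. c i * (\<sigma> i * (a \<bullet> G i)))"
    by (simp add: right_diff_distrib sum_subtractf sum_distrib_left mult_ac)
  also have "\<dots> < (\<Sum>i<n. c i * rho tau (r i))"
    using t slope by simp
  finally show False
    using min[of "\<gamma>\<^sub>0 + t *\<^sub>R a"] by (simp add: r_def)
qed

lemma quantile_regression_subgradient_condition:
  fixes G :: "nat \<Rightarrow> 'a::euclidean_space" and Y c :: "nat \<Rightarrow> real"
  assumes "\<And>\<gamma>. (\<Sum>i<n. c i * rho tau (Y i - \<gamma>\<^sub>0 \<bullet> G i)) \<le> (\<Sum>i<n. c i * rho tau (Y i - \<gamma> \<bullet> G i))"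
  obtains s where "\<And>i. i < n \<Longrightarrow> s i \<in> rho_subdiff tau (Y i - \<gamma>\<^sub>0 \<bullet> G i)"
    and "(\<Sum>i<n. (c i * s i) *\<^sub>R G i) = 0"
proof -
  obtain s where s: "\<forall>i\<in>{..<n}. s i \<in> rho_subdiff tau (Y i - \<gamma>\<^sub>0 \<bullet> G i)"
    and sum_zero: "(\<Sum>i<n. s i *\<^sub>R (c i *\<^sub>R G i)) = 0"
    using zero_mem_sum_rho_subdiff[OF assms] unfolding set_sum_image[OF finite_lessThan] by auto
  show thesis
  proof (rule that)
    show "s i \<in> rho_subdiff tau (Y i - \<gamma>\<^sub>0 \<bullet> G i)" if "i < n" for i
      using s that by simp
    show "(\<Sum>i<n. (c i * s i) *\<^sub>R G i) = 0"
      using sum_zero by (simp add: mult.commute)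
  qed
qed

lemma odds_ratio_bounded_iff:
  fixes L e p :: real
  assumes L: "L > 0" and e: "0 < e" "e < 1"
  shows "(inverse L \<le> (p / (1 - p)) / (e / (1 - e)) \<and> (p / (1 - p)) / (e / (1 - e)) \<le> L) \<longleftrightarrow>
         (\<exists>q\<in>{inverse L..L}. p = 1 / (1 + q * ((1 - e) / e)))"
proof -
  have ratio: "(p / (1 - p)) / (e / (1 - e)) = 1 / q" if p: "p = 1 / (1 + q * ((1 - e) / e))" "q > 0" for q
  proof -
    define w where "w = (1 - e) / e"
    have "w > 0" using e by (simp add: w_def)
    then have "q * w > 0" using \<open>q > 0\<close> by simp
    then have "p / (1 - p) = 1 / (q * w)"
      unfolding p w_def[symmetric] by (simp add: field_simps)
    moreover have "e / (1 - e) = 1 / w"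
      by (simp add: w_def)
    ultimately show ?thesis
      using \<open>w > 0\<close> by simp
  qed
  show ?thesis
  proof
    assume bounds: "inverse L \<le> (p / (1 - p)) / (e / (1 - e)) \<and> (p / (1 - p)) / (e / (1 - e)) \<le> L"
    define R where "R = (p / (1 - p)) / (e / (1 - e))"
    have R: "inverse L \<le> R" "R \<le> L" "R > 0"
      using bounds L unfolding R_def by (auto intro: less_le_trans[of 0 "inverse L"])
    moreover have "p / (1 - p) = R * (e / (1 - e))"
      using e by (simp add: R_def)
    ultimately have "p / (1 - p) > 0"
      using e by simp
    then have "0 < p" "p < 1"
      by (auto simp: zero_less_divide_iff)
    then have "1 + inverse R * ((1 - e) / e) = 1 / p"
      using e by (simp add: R_def field_simps)
    then have "p = 1 / (1 + inverse R * ((1 - e) / e))"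
      by simp
    moreover have "inverse R \<le> L"
      using le_imp_inverse_le[OF R(1)] L by simp
    moreover have "inverse L \<le> inverse R"
      using le_imp_inverse_le[OF R(2) R(3)] .
    ultimately show "\<exists>q\<in>{inverse L..L}. p = 1 / (1 + q * ((1 - e) / e))"
      by (intro bexI[of _ "inverse R"]) simp_all
  next
    assume "\<exists>q\<in>{inverse L..L}. p = 1 / (1 + q * ((1 - e) / e))"
    then obtain q where q: "inverse L \<le> q" "q \<le> L" and p: "p = 1 / (1 + q * ((1 - e) / e))"
      by auto
    have "0 < inverse L"
      using L by simp
    then have "q > 0"
      using q(1) by linarith
    have "inverse L \<le> inverse q"
      using le_imp_inverse_le[OF q(2) \<open>q > 0\<close>] .
    moreover have "inverse q \<le> L"
      using le_imp_inverse_le[OF q(1) \<open>0 < inverse L\<close>] by simp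
    ultimately show "inverse L \<le> (p / (1 - p)) / (e / (1 - e)) \<and> (p / (1 - p)) / (e / (1 - e)) \<le> L"
      using ratio[OF p \<open>q > 0\<close>] by (simp add: inverse_eq_divide)
  qed
qed

lemma mem_Eset_iff:
  assumes "L > 0" and "\<And>i. i < n \<Longrightarrow> 0 < e i \<and> e i < 1"
  shows "eb \<in> Eset n L e \<longleftrightarrow> (\<forall>i<n. \<exists>q\<in>{inverse L..L}. eb i = 1 / (1 + q * ((1 - e i) / e i)))"
  using assms odds_ratio_bounded_iff unfolding Eset_def by simp

lemma mult_one_plus_le_powr_sgn:
  fixes r q w L :: real
  assumes "L > 0" "q \<in> {inverse L..L}" "w \<ge> 0"
  shows "r * (1 + q * w) \<le> r * (1 + L powr sgn r * w)"
proof (cases r "0::real" rule: linorder_cases)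
  case less
  then show ?thesis using assms by (simp add: powr_minus mult_right_mono)
next
  case greater
  then show ?thesis using assms by (simp add: mult_right_mono)
qed simp

lemma quantile_range_to_odds_range:
  fixes L s :: real
  assumes L: "L \<ge> 1"
  defines "tau \<equiv> L / (L + 1)"
  shows "1 + tau * (L - inverse L) = L"
    and "1 + (tau - 1) * (L - inverse L) = inverse L"
    and "s \<in> {tau - 1..tau} \<Longrightarrow> 1 + s * (L - inverse L) \<in> {inverse L..L}"
proof -
  have "L > 0" "inverse L \<le> 1"
    using L by (auto simp: inverse_le_1_iff)
  then have "L - inverse L \<ge> 0"
    using L by linarith
  have "L + L * L > 0"
    using \<open>L > 0\<close> by (simp add: add_pos_pos)
  then show top: "1 + tau * (L - inverse L) = L"
    and bot: "1 + (tau - 1) * (L - inverse L) = inverse L"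
    using \<open>L > 0\<close> by (simp_all add: tau_def field_simps)
  assume "s \<in> {tau - 1..tau}"
  then show "1 + s * (L - inverse L) \<in> {inverse L..L}"
    using mult_right_mono[OF _ \<open>L - inverse L \<ge> 0\<close>, of s tau] mult_right_mono[OF _ \<open>L - inverse L \<ge> 0\<close>, of "tau - 1" s]
      top bot by auto
qed

lemma Pn_balanced_split:
  fixes G :: "nat \<Rightarrow> 'a::real_inner"
  assumes "Pn n (\<lambda>i. (Z i / eb i) *\<^sub>R G i) = Pn n (\<lambda>i. (Z i / e i) *\<^sub>R G i)"
  shows "Pn n (\<lambda>i. Y i * Z i / eb i)
       = Pn n (\<lambda>i. (Y i - \<gamma> \<bullet> G i) * Z i / eb i) + Pn n (\<lambda>i. (\<gamma> \<bullet> G i) * Z i / e i)"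
proof -
  have "Pn n (\<lambda>i. Y i * Z i / eb i)
      = Pn n (\<lambda>i. (Y i - \<gamma> \<bullet> G i) * Z i / eb i + (\<gamma> \<bullet> G i) * (Z i / eb i))"
    by (simp add: algebra_simps add_divide_distrib diff_divide_distrib)
  also have "\<dots> = Pn n (\<lambda>i. (Y i - \<gamma> \<bullet> G i) * Z i / eb i) + \<gamma> \<bullet> Pn n (\<lambda>i. (Z i / eb i) *\<^sub>R G i)"
    by (simp add: Pn_add inner_Pn_scaleR)
  also have "\<gamma> \<bullet> Pn n (\<lambda>i. (Z i / eb i) *\<^sub>R G i) = Pn n (\<lambda>i. (\<gamma> \<bullet> G i) * Z i / e i)"
    unfolding assms inner_Pn_scaleR by simp
  finally show ?thesis .
qed

lemma reweighted_outcome_mean_le: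
  fixes G :: "nat \<Rightarrow> 'a::real_inner"
  assumes L: "L > 0"
    and e: "\<And>i. i < n \<Longrightarrow> 0 < e i \<and> e i < 1"
    and Z: "\<And>i. i < n \<Longrightarrow> Z i \<ge> 0"
    and eb: "eb \<in> Eset n L e"
    and balance: "Pn n (\<lambda>i. (Z i / eb i) *\<^sub>R G i) = Pn n (\<lambda>i. (Z i / e i) *\<^sub>R G i)"
  shows "Pn n (\<lambda>i. Y i * Z i / eb i)
       \<le> Pn n (\<lambda>i. (Y i - \<gamma> \<bullet> G i) * Z i * (1 + L powr sgn (Y i - \<gamma> \<bullet> G i) * (1 - e i) / e i))
         + Pn n (\<lambda>i. (\<gamma> \<bullet> G i) * Z i / e i)"
proof -
  have "(Y i - \<gamma> \<bullet> G i) * Z i / eb i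
      \<le> (Y i - \<gamma> \<bullet> G i) * Z i * (1 + L powr sgn (Y i - \<gamma> \<bullet> G i) * (1 - e i) / e i)"
    if i: "i < n" for i
  proof -
    have "\<forall>i<n. \<exists>q\<in>{inverse L..L}. eb i = 1 / (1 + q * ((1 - e i) / e i))"
      using eb mem_Eset_iff[where n=n and e=e, OF L e] by blast
    then obtain q where q: "q \<in> {inverse L..L}" and "eb i = 1 / (1 + q * ((1 - e i) / e i))"
      using i by blast
    then have "(Y i - \<gamma> \<bullet> G i) * Z i / eb i = Z i * ((Y i - \<gamma> \<bullet> G i) * (1 + q * ((1 - e i) / e i)))"
      by simp
    also have "\<dots> \<le> Z i * ((Y i - \<gamma> \<bullet> G i) * (1 + L powr sgn (Y i - \<gamma> \<bullet> G i) * ((1 - e i) / e i)))"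
      using mult_one_plus_le_powr_sgn[OF L q, of "(1 - e i) / e i" "Y i - \<gamma> \<bullet> G i"] e[OF i] Z[OF i]
      by (simp add: mult_left_mono)
    finally show ?thesis
      by (simp add: mult_ac)
  qed
  then show ?thesis
    unfolding Pn_balanced_split[OF balance, of Y \<gamma>] by (intro add_right_mono Pn_mono)
qed

lemma extremal_weights_from_subgradients:
  fixes G :: "nat \<Rightarrow> 'a::real_inner"
  assumes L: "L \<ge> 1"
    and e: "\<And>i. i < n \<Longrightarrow> 0 < e i \<and> e i < 1"
    and s: "\<And>i. i < n \<Longrightarrow> s i \<in> rho_subdiff (L / (L + 1)) (Y i - \<gamma>\<^sub>0 \<bullet> G i)"
    and dual: "(\<Sum>i<n. (Z i * ((1 - e i) / e i) * s i) *\<^sub>R G i) = 0"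
  obtains eb where "eb \<in> Eset n L e"
    and "Pn n (\<lambda>i. (Z i / eb i) *\<^sub>R G i) = Pn n (\<lambda>i. (Z i / e i) *\<^sub>R G i)"
    and "Pn n (\<lambda>i. Y i * Z i / eb i)
       = Pn n (\<lambda>i. (Y i - \<gamma>\<^sub>0 \<bullet> G i) * Z i * (1 + L powr sgn (Y i - \<gamma>\<^sub>0 \<bullet> G i) * (1 - e i) / e i))
         + Pn n (\<lambda>i. (\<gamma>\<^sub>0 \<bullet> G i) * Z i / e i)"
proof -
  define r where "r i = Y i - \<gamma>\<^sub>0 \<bullet> G i" for i
  \<comment> \<open>the affine map sending the subgradient range \<open>[L/(L+1) - 1, L/(L+1)]\<close> onto \<open>[inverse L, L]\<close>\<close>
  define q where "q i = 1 + s i * (L - inverse L)" for i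
  define eb where "eb i = 1 / (1 + q i * ((1 - e i) / e i))" for i
  have q: "q i \<in> {inverse L..L}" if "i < n" for i
    using quantile_range_to_odds_range(3)[OF L] s[OF that] rho_subdiff_subset unfolding q_def by blast
  have q_extremal: "r i * (1 + q i * w) = r i * (1 + L powr sgn (r i) * w)" if "i < n" for i w
  proof (cases "r i" "0::real" rule: linorder_cases)
    case less
    then show ?thesis
      using s[OF that] quantile_range_to_odds_range(2)[OF L] L
      by (simp add: r_def q_def rho_subdiff_def powr_minus)
  next
    case greater
    then show ?thesis
      using s[OF that] quantile_range_to_odds_range(1)[OF L] L by (simp add: r_def q_def rho_subdiff_def)
  qed simp
  have "eb \<in> Eset n L e"
    using L q mem_Eset_iff[where n=n and e=e, OF _ e] by (auto simp: eb_def)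
  define c where "c i = Z i * ((1 - e i) / e i)" for i
  have "Z i / eb i = Z i / e i + (L - inverse L) * (c i * s i)" if "i < n" for i
    using e[OF that] L by (simp add: eb_def q_def c_def field_simps)
  then have "(\<Sum>i<n. (Z i / eb i) *\<^sub>R G i)
      = (\<Sum>i<n. (Z i / e i) *\<^sub>R G i) + (L - inverse L) *\<^sub>R (\<Sum>i<n. (c i * s i) *\<^sub>R G i)"
    by (simp add: scaleR_add_left sum.distrib scaleR_sum_right)
  then have balance: "Pn n (\<lambda>i. (Z i / eb i) *\<^sub>R G i) = Pn n (\<lambda>i. (Z i / e i) *\<^sub>R G i)"
    by (simp add: Pn_def dual[folded c_def])
  have "(Y i - \<gamma>\<^sub>0 \<bullet> G i) * Z i / eb i
      = (Y i - \<gamma>\<^sub>0 \<bullet> G i) * Z i * (1 + L powr sgn (Y i - \<gamma>\<^sub>0 \<bullet> G i) * (1 - e i) / e i)"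
    if "i < n" for i
    using q_extremal[OF that, of "(1 - e i) / e i"] by (simp add: eb_def r_def mult_ac)
  then have "Pn n (\<lambda>i. Y i * Z i / eb i)
       = Pn n (\<lambda>i. (Y i - \<gamma>\<^sub>0 \<bullet> G i) * Z i * (1 + L powr sgn (Y i - \<gamma>\<^sub>0 \<bullet> G i) * (1 - e i) / e i))
         + Pn n (\<lambda>i. (\<gamma>\<^sub>0 \<bullet> G i) * Z i / e i)"
    unfolding Pn_balanced_split[OF balance, of Y \<gamma>\<^sub>0] by (simp cong: Pn_cong)
  with \<open>eb \<in> Eset n L e\<close> balance that show thesis
    by blast
qed

lemma reweighted_outcome_mean_bound_attained:
  fixes G :: "nat \<Rightarrow> 'a::euclidean_space"
  assumes L: "L \<ge> 1"
    and e: "\<And>i. i < n \<Longrightarrow> 0 < e i \<and> e i < 1"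
    and min: "\<And>\<gamma>. Pn n (\<lambda>i. rho (L / (L + 1)) (Y i - \<gamma>\<^sub>0 \<bullet> G i) * Z i * (1 - e i) / e i)
                  \<le> Pn n (\<lambda>i. rho (L / (L + 1)) (Y i - \<gamma> \<bullet> G i) * Z i * (1 - e i) / e i)"
  obtains eb where "eb \<in> Eset n L e"
    and "Pn n (\<lambda>i. (Z i / eb i) *\<^sub>R G i) = Pn n (\<lambda>i. (Z i / e i) *\<^sub>R G i)"
    and "Pn n (\<lambda>i. Y i * Z i / eb i)
       = Pn n (\<lambda>i. (Y i - \<gamma>\<^sub>0 \<bullet> G i) * Z i * (1 + L powr sgn (Y i - \<gamma>\<^sub>0 \<bullet> G i) * (1 - e i) / e i))
         + Pn n (\<lambda>i. (\<gamma>\<^sub>0 \<bullet> G i) * Z i / e i)"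
proof -
  have "(\<Sum>i<n. Z i * ((1 - e i) / e i) * rho (L / (L + 1)) (Y i - \<gamma>\<^sub>0 \<bullet> G i))
      \<le> (\<Sum>i<n. Z i * ((1 - e i) / e i) * rho (L / (L + 1)) (Y i - \<gamma> \<bullet> G i))" for \<gamma>
    using min[of \<gamma>] unfolding Pn_le_Pn_iff by (simp add: mult_ac)
  then obtain s where s: "\<And>i. i < n \<Longrightarrow> s i \<in> rho_subdiff (L / (L + 1)) (Y i - \<gamma>\<^sub>0 \<bullet> G i)"
    and dual: "(\<Sum>i<n. (Z i * ((1 - e i) / e i) * s i) *\<^sub>R G i) = 0"
    by (rule quantile_regression_subgradient_condition) blast
  show thesis
    by (rule extremal_weights_from_subgradients[where Z=Z and s=s and Y=Y and \<gamma>\<^sub>0=\<gamma>\<^sub>0])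
      (fact L e s that dual)+
qed

theorem proposition6:
  fixes n :: nat
    and X :: "nat \<Rightarrow> real ^ 'd"
    and Y Z :: "nat \<Rightarrow> real"
    and ehat :: "real ^ 'd \<Rightarrow> real"
    and g :: "real ^ 'd \<Rightarrow> real ^ 'k"
    and Lam :: real
    and gammahat :: "real ^ 'k"
  assumes Lam: "Lam \<ge> 1"
    and Zbin: "\<forall>i<n. Z i \<in> {0, 1}"
    and ehat_range: "\<forall>i<n. ehat (X i) \<in> {0<..<1}"
    and intercept: "\<exists>j. \<forall>x. g x $ j = 1"
    and gammahat_min: "\<forall>gamma. Ln n (Lam / (Lam + 1)) ehat g X Y Z gammahat
                                 \<le> Ln n (Lam / (Lam + 1)) ehat g X Y Z gamma"
  defines "obj \<equiv> \<lambda>ebar. Pn n (\<lambda>i. Y i * Z i / ebar i) / Pn n (\<lambda>i. Z i / ehat (X i))"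
    and "feasible \<equiv> {ebar \<in> Eset n Lam (\<lambda>i. ehat (X i)).
            Pn n (\<lambda>i. (Z i / ebar i) *\<^sub>R g (X i)) = Pn n (\<lambda>i. (Z i / ehat (X i)) *\<^sub>R g (X i))}"
    and "val \<equiv> (Pn n (\<lambda>i. (Y i - gammahat \<bullet> g (X i)) * Z i
                     * (1 + Lam powr sgn (Y i - gammahat \<bullet> g (X i)) * (1 - ehat (X i)) / ehat (X i)))
               + Pn n (\<lambda>i. (gammahat \<bullet> g (X i)) * Z i / ehat (X i)))
             / Pn n (\<lambda>i. Z i / ehat (X i))"
  shows "(\<exists>ebar \<in> feasible. obj ebar = val) \<and> (\<forall>ebar \<in> feasible. obj ebar \<le> val)"
proof -
  have e: "0 < ehat (X i) \<and> ehat (X i) < 1" if "i < n" for i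
    using ehat_range that by auto
  have Z: "Z i \<ge> 0" if "i < n" for i
    using Zbin that by auto
  have "Pn n (\<lambda>i. Z i / ehat (X i)) \<ge> 0"
    by (intro Pn_nonneg divide_nonneg_pos; simp add: e Z)
  then have "obj ebar \<le> val" if "ebar \<in> feasible" for ebar
    using that Lam unfolding obj_def val_def feasible_def
    by (intro divide_right_mono reweighted_outcome_mean_le[where e="\<lambda>i. ehat (X i)" and G="\<lambda>i. g (X i)"] e Z)
      auto
  moreover obtain ebar where "ebar \<in> Eset n Lam (\<lambda>i. ehat (X i))"
    and "Pn n (\<lambda>i. (Z i / ebar i) *\<^sub>R g (X i)) = Pn n (\<lambda>i. (Z i / ehat (X i)) *\<^sub>R g (X i))"
    and "Pn n (\<lambda>i. Y i * Z i / ebar i)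
       = Pn n (\<lambda>i. (Y i - gammahat \<bullet> g (X i)) * Z i
                  * (1 + Lam powr sgn (Y i - gammahat \<bullet> g (X i)) * (1 - ehat (X i)) / ehat (X i)))
         + Pn n (\<lambda>i. (gammahat \<bullet> g (X i)) * Z i / ehat (X i))"
    using reweighted_outcome_mean_bound_attained[where e="\<lambda>i. ehat (X i)" and G="\<lambda>i. g (X i)",
        OF Lam e gammahat_min[unfolded Ln_def, rule_format]] .
  then have "ebar \<in> feasible" "obj ebar = val"
    unfolding feasible_def obj_def val_def by simp_all
  ultimately show ?thesis
    by blast
qed

end
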